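(* Let $(X,\mathcal{A})$ be a resolvable design with $v$ points, $b$ blocks of size $k$, $r$ parallel classes and $b_r=b/r$ blocks per parallel class. Consider the coded caching system with $N$ files, $b$ caches each of size $M=Nk/v$ files, and $K=b$ users each having access to exactly one cache (user $j$ to the cache of block $A_j$), with the placement and delivery described in the context. If $N\geq K$ and the demands are distinct, the scheme achieves the worst-case rate $R=\frac{rk\binom{b_r}{2}}{v}$, and the number of users benefited in each transmission (the gain) is $2$.
   Context: A resolvable design $(X,\mathcal{A})$: $X$ a finite set of $v$ points, $\mathcal{A}$ a collection of $b$ blocks each of size $k$, partitioned into $r$ parallel classes, each being a set of $b_r=v/k$ pairwise disjoint blocks with union $X$. Placement: each file $W_i$ ($i\in[N]$, unit size) is split into $v$ equal subfiles $W_{i,x}$, $x\in X$; the cache of block $A_j$ stores $W_{i,x}$ for all $x\in A_j$ and all $i$. Delivery: user $m$ demands $W_{d_m}$. For each parallel class and each pair of distinct blocks $C_{i},C_{j}$ in it, let the users of these two caches be $m$ (cache $C_i$) and $m'$ (cache $C_j$); set $f_m=C_j=\{y_{m,1},\dots,y_{m,k}\}$ and $f_{m'}=C_i=\{y_{m',1},\dots,y_{m',k}\}$ (fixed orderings), and transmit $W_{d_m,y_{m,s}}\oplus W_{d_{m'},y_{m',s}}$ for each $s\in[k]$, each of size $1/v$ file. The rate is the total amount transmitted in units of files; a user is benefited by a transmission if it obtains a subfile of its demanded file from it. *)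

theory Defs
  imports Complex_Main
begin

definition resolvable_design ::
  "'p set \<Rightarrow> (nat \<Rightarrow> 'p set) \<Rightarrow> nat \<Rightarrow> nat \<Rightarrow> nat \<Rightarrow> nat \<Rightarrow> (nat \<Rightarrow> nat) \<Rightarrow> bool" where
  "resolvable_design X A b k r br cls \<longleftrightarrow>
     finite X \<and>
     (\<forall>j<b. A j \<subseteq> X \<and> card (A j) = k) \<and>
     (\<forall>j<b. cls j < r) \<and>
     (\<forall>c<r. (\<Union>j\<in>{j. j < b \<and> cls j = c}. A j) = X
          \<and> (\<forall>i<b. \<forall>j<b. i \<noteq> j \<and> cls i = c \<and> cls j = c \<longrightarrow> A i \<inter> A j = {})
          \<and> card {j. j < b \<and> cls j = c} = br)"

text \<open>Subfile W_{i,x} is labelled (i, x). A transmission is the XOR of two subfiles,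
  represented by the pair of their labels.\<close>
type_synonym 'p subfile = "nat \<times> 'p"
type_synonym 'p transmission = "'p subfile \<times> 'p subfile"

definition trans_idx :: "nat \<Rightarrow> (nat \<Rightarrow> nat) \<Rightarrow> nat \<Rightarrow> (nat \<times> nat \<times> nat) set" where
  "trans_idx b cls k = {(i, j, s). i < j \<and> j < b \<and> cls i = cls j \<and> s < k}"

text \<open>User i (cache A i) and user j (cache A j); f_i = A j, f_j = A i with fixed orderings
  ord j s, ord i s. Transmit W_{d i, ord j s} XOR W_{d j, ord i s}.\<close>
definition transmission ::
  "(nat \<Rightarrow> nat) \<Rightarrow> (nat \<Rightarrow> nat \<Rightarrow> 'p) \<Rightarrow> nat \<times> nat \<times> nat \<Rightarrow> 'p transmission" where
  "transmission d ord t = (case t of (i, j, s) \<Rightarrow> ((d i, ord j s), (d j, ord i s)))"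

text \<open>Rate: total amount transmitted (each transmission has size 1/v file), in files.\<close>
definition delivery_rate :: "'p set \<Rightarrow> nat \<Rightarrow> (nat \<Rightarrow> nat) \<Rightarrow> nat \<Rightarrow> real" where
  "delivery_rate X b cls k = (\<Sum>t\<in>trans_idx b cls k. 1 / real (card X))"

definition distinct_demands :: "nat \<Rightarrow> nat \<Rightarrow> (nat \<Rightarrow> nat) set" where
  "distinct_demands N b = {d. (\<forall>u<b. d u < N) \<and> inj_on d {..<b}}"

text \<open>Worst-case rate over all distinct demand vectors (the number and sizes of the scheme's
  transmissions do not depend on the demand vector).\<close>
definition worst_case_rate :: "'p set \<Rightarrow> nat \<Rightarrow> nat \<Rightarrow> (nat \<Rightarrow> nat) \<Rightarrow> nat \<Rightarrow> real" where
  "worst_case_rate X N b cls k =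
     (SUP d\<in>distinct_demands N b. delivery_rate X b cls k)"

text \<open>User u (cache A u, demand d u) obtains a subfile of its demanded file from transmission
  (e1, e2): one summand is a subfile of W_{d u} not in its cache, and the other summand is in
  its cache (the cache of A u stores W_{i,x} for all files i and x in A u).\<close>
definition benefits :: "(nat \<Rightarrow> 'p set) \<Rightarrow> (nat \<Rightarrow> nat) \<Rightarrow> nat \<Rightarrow> 'p transmission \<Rightarrow> bool" where
  "benefits A d u tr \<longleftrightarrow>
     (case tr of (e1, e2) \<Rightarrow>
        (fst e1 = d u \<and> snd e1 \<notin> A u \<and> snd e2 \<in> A u) \<or>
        (fst e2 = d u \<and> snd e2 \<notin> A u \<and> snd e1 \<in> A u))"

end

theory Submission
  imports Defs
begin

text \<open>Transmissions are indexed by a pair of distinct blocks of one parallel class together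
  with a position s < k; counting the pairs class by class gives r (b_r choose 2) pairs, hence
  r k (b_r choose 2) transmissions of size 1/v each. In the transmission for blocks i < j, the
  user of cache i decodes the s-th point of block j because the other summand is the s-th point
  of its own block; since blocks of a class are disjoint and demands are distinct, exactly the
  two users i and j benefit. Every point outside block u lies in some other block of u's class,
  so every missing subfile of user u is delivered.\<close>

lemma card_ordered_pairs:
  fixes C :: "'a :: linorder set"
  assumes "finite C"
  shows "card {(i, j). i < j \<and> i \<in> C \<and> j \<in> C} = card C choose 2"
proof -
  have "bij_betw (\<lambda>(i, j). {i, j}) {(i, j). i < j \<and> i \<in> C \<and> j \<in> C} {S. S \<subseteq> C \<and> card S = 2}"
  proof (rule bij_betwI')
    fix p q assume "p \<in> {(i, j). i < j \<and> i \<in> C \<and> j \<in> C}" "q \<in> {(i, j). i < j \<and> i \<in> C \<and> j \<in> C}"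
    then show "((case p of (i, j) \<Rightarrow> {i, j}) = (case q of (i, j) \<Rightarrow> {i, j})) = (p = q)"
      by (cases p; cases q) (auto simp: doubleton_eq_iff)
  next
    fix S assume "S \<in> {S. S \<subseteq> C \<and> card S = 2}"
    then obtain x y where S: "S = {x, y}" "x \<noteq> y" "S \<subseteq> C" by (auto simp: card_2_iff)
    show "\<exists>p\<in>{(i, j). i < j \<and> i \<in> C \<and> j \<in> C}. S = (case p of (i, j) \<Rightarrow> {i, j})"
    proof (cases "x < y")
      case True with S show ?thesis by (intro bexI[of _ "(x, y)"]) auto
    next
      case False with S show ?thesis by (intro bexI[of _ "(y, x)"]) auto
    qed
  qed auto
  then have "card {(i, j). i < j \<and> i \<in> C \<and> j \<in> C} = card {S. S \<subseteq> C \<and> card S = 2}"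
    by (rule bij_betw_same_card)
  also have "\<dots> = card C choose 2"
    using n_subsets[OF assms] by simp
  finally show ?thesis .
qed

lemma resolvable_design_block_in_class:
  assumes "resolvable_design X A b k r br cls" and "u < b" and "x \<in> X"
  obtains j where "j < b" "cls j = cls u" "x \<in> A j"
proof -
  have "cls u < r" and "(\<Union>j\<in>{j. j < b \<and> cls j = cls u}. A j) = X"
    using assms unfolding resolvable_design_def by blast+
  with assms(3) that show thesis by blast
qed

lemma resolvable_design_class_disjoint:
  assumes "resolvable_design X A b k r br cls"
    and "i < b" "j < b" "i \<noteq> j" "cls i = cls j"
  shows "A i \<inter> A j = {}"
  using assms unfolding resolvable_design_def by blast

lemma resolvable_design_card_class_pairs:
  assumes design: "resolvable_design X A b k r br cls"
  shows "card {(i, j). i < j \<and> j < b \<and> cls i = cls j} = r * (br choose 2)"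
proof -
  define class_blocks where "class_blocks c = {j. j < b \<and> cls j = c}" for c
  define class_pairs where
    "class_pairs c = {(i, j). i < j \<and> i \<in> class_blocks c \<and> j \<in> class_blocks c}" for c
  have classes: "\<forall>j<b. cls j < r" and class_size: "\<forall>c<r. card (class_blocks c) = br"
    using design unfolding resolvable_design_def class_blocks_def by blast+
  have finite_class_pairs: "finite (class_pairs c)" for c
    by (rule finite_subset[of _ "{..<b} \<times> {..<b}"]) (auto simp: class_pairs_def class_blocks_def)
  have "{(i, j). i < j \<and> j < b \<and> cls i = cls j} = (\<Union>c\<in>{..<r}. class_pairs c)"
    using classes by (auto simp: class_pairs_def class_blocks_def)
  also have "card \<dots> = (\<Sum>c<r. card (class_pairs c))"
    using finite_class_pairs by (intro card_UN_disjoint) (auto simp: class_pairs_def class_blocks_def)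
  also have "\<dots> = (\<Sum>c<r. br choose 2)"
    using card_ordered_pairs[of "class_blocks _"] class_size
    by (intro sum.cong) (simp_all add: class_pairs_def class_blocks_def)
  finally show ?thesis by simp
qed

lemma resolvable_design_card_trans_idx:
  assumes "resolvable_design X A b k r br cls"
  shows "card (trans_idx b cls k) = r * k * (br choose 2)"
proof -
  let ?P = "{(i, j). i < j \<and> j < b \<and> cls i = cls j}"
  have "bij_betw (\<lambda>((i, j), s). (i, j, s)) (?P \<times> {..<k}) (trans_idx b cls k)"
    by (rule bij_betwI') (auto simp: trans_idx_def)
  then have "card (trans_idx b cls k) = card (?P \<times> {..<k})"
    by (simp add: bij_betw_same_card)
  then show ?thesis
    using resolvable_design_card_class_pairs[OF assms] by (simp add: card_cartesian_product)
qed

lemma delivery_rate_eq_card: "delivery_rate X b cls k = real (card (trans_idx b cls k)) / real (card X)"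
  by (simp add: delivery_rate_def)

lemma distinct_demands_nonempty:
  assumes "b \<le> N"
  shows "distinct_demands N b \<noteq> {}"
proof -
  have "id \<in> distinct_demands N b"
    using assms by (simp add: distinct_demands_def)
  then show ?thesis by blast
qed

lemma worst_case_rate_eq_delivery_rate:
  assumes "b \<le> N"
  shows "worst_case_rate X N b cls k = delivery_rate X b cls k"
  using distinct_demands_nonempty[OF assms] by (simp add: worst_case_rate_def)

lemma transmission_delivers_missing_subfile:
  assumes design: "resolvable_design X A b k r br cls"
    and ord: "\<forall>j<b. bij_betw (ord j) {..<k} (A j)"
    and u: "u < b" and x: "x \<in> X - A u"
  shows "\<exists>t\<in>trans_idx b cls k.
          (case transmission d ord t of (e1, e2) \<Rightarrow>
             (e1 = (d u, x) \<and> snd e2 \<in> A u) \<or> (e2 = (d u, x) \<and> snd e1 \<in> A u))"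
proof -
  obtain j where j: "j < b" "cls j = cls u" "x \<in> A j"
    using resolvable_design_block_in_class[OF design u] x by blast
  have "j \<noteq> u" using j x by auto
  obtain s where s: "s < k" "ord j s = x"
    using ord j by (metis bij_betw_iff_bijections lessThan_iff)
  have "ord u s \<in> A u"
    using ord u s(1) by (meson bij_betwE lessThan_iff)
  consider "u < j" | "j < u" using \<open>j \<noteq> u\<close> by linarith
  then show ?thesis
  proof cases
    case 1 with j s \<open>ord u s \<in> A u\<close> show ?thesis
      by (intro bexI[of _ "(u, j, s)"]) (auto simp: trans_idx_def transmission_def)
  next
    case 2 with j s u \<open>ord u s \<in> A u\<close> show ?thesis
      by (intro bexI[of _ "(j, u, s)"]) (auto simp: trans_idx_def transmission_def)
  qed
qed

lemma benefited_users_transmission: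
  assumes design: "resolvable_design X A b k r br cls"
    and ord: "\<forall>j<b. bij_betw (ord j) {..<k} (A j)"
    and inj: "inj_on d {..<b}"
    and t: "(i, j, s) \<in> trans_idx b cls k"
  shows "{u. u < b \<and> benefits A d u (transmission d ord (i, j, s))} = {i, j}"
proof -
  have ij: "i < j" "j < b" "cls i = cls j" "s < k"
    using t by (auto simp: trans_idx_def)
  have "A i \<inter> A j = {}"
    using resolvable_design_class_disjoint[OF design] ij by simp
  moreover have "ord i s \<in> A i" "ord j s \<in> A j"
    using ord ij by (meson bij_betwE lessThan_iff order.strict_trans)+
  ultimately show ?thesis
    using ij by (auto simp: benefits_def transmission_def dest: inj_onD[OF inj])
qed

theorem theorem2:
  fixes X :: "'p set" and A :: "nat \<Rightarrow> 'p set" and b k r br N :: nat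
    and cls :: "nat \<Rightarrow> nat" and ord :: "nat \<Rightarrow> nat \<Rightarrow> 'p" and d :: "nat \<Rightarrow> nat"
  assumes design: "resolvable_design X A b k r br cls"
    and ord: "\<forall>j<b. bij_betw (ord j) {..<k} (A j)"
    and NK: "N \<ge> b"
    and dem: "d \<in> distinct_demands N b"
  shows "delivery_rate X b cls k = real (r * k * (br choose 2)) / real (card X)
    \<and> worst_case_rate X N b cls k = real (r * k * (br choose 2)) / real (card X)
    \<and> (\<forall>u<b. \<forall>x\<in>X - A u. \<exists>t\<in>trans_idx b cls k.
          (case transmission d ord t of (e1, e2) \<Rightarrow>
             (e1 = (d u, x) \<and> snd e2 \<in> A u) \<or> (e2 = (d u, x) \<and> snd e1 \<in> A u)))
    \<and> (\<forall>t\<in>trans_idx b cls k. card {u. u < b \<and> benefits A d u (transmission d ord t)} = 2)"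
proof -
  have rate: "delivery_rate X b cls k = real (r * k * (br choose 2)) / real (card X)"
    using resolvable_design_card_trans_idx[OF design] by (simp add: delivery_rate_eq_card)
  have inj: "inj_on d {..<b}"
    using dem by (simp add: distinct_demands_def)
  have "card {u. u < b \<and> benefits A d u (transmission d ord t)} = 2"
    if "t \<in> trans_idx b cls k" for t
  proof -
    obtain i j s where "t = (i, j, s)" by (cases t)
    with that benefited_users_transmission[OF design ord inj] show ?thesis
      by (auto simp: trans_idx_def)
  qed
  moreover have "worst_case_rate X N b cls k = real (r * k * (br choose 2)) / real (card X)"
    by (simp only: worst_case_rate_eq_delivery_rate[OF NK] rate)
  ultimately show ?thesis
    using rate transmission_delivers_missing_subfile[OF design ord] by blast
qed

end
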